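(* Let $m\ge 0$ and let $f:\mathbb{R}^n\to\mathbb{R}\cup\{+\infty\}$ be a closed (lower semicontinuous), proper, $m$-weakly convex function. Let $\eta\ge 0$, $\epsilon\ge 0$, and suppose $x\in\mathrm{dom}\,f$ is an $(\eta,\epsilon)$-inexact stationary point of $f$. Then for every $\lambda>0$, $$\|\nabla f_{m+\lambda}(x)\|\le (m+\lambda)\left(\frac{2}{\lambda}\eta+\sqrt{\frac{2}{\lambda}\epsilon}\right).$$ In particular, if $m>0$, then $\|\nabla f_{2m}(x)\|\le 4\eta+2\sqrt{2m\epsilon}$.
   Context: A function $f$ is $m$-weakly convex ($m\ge 0$) if $x\mapsto f(x)+\frac{m}{2}\|x\|^2$ is convex. For such $f$ and $\epsilon\ge 0$, the $\epsilon$-inexact subdifferential at $x\in\mathrm{dom}\,f$ is $\partial_\epsilon f(x)=\{v\in\mathbb{R}^n: f(y)\ge f(x)+\langle v,y-x\rangle-\frac{m}{2}\|y-x\|^2-\epsilon\ \ \forall y\in\mathbb{R}^n\}$; for $\epsilon=0$ this is the (Fréchet) subdifferential $\partial f(x)$. A point $x$ is an $(\eta,\epsilon)$-inexact stationary point if $\mathrm{dist}(0,\partial_\epsilon f(x))\le\eta$. For $\rho>m$ the Moreau envelope is $f_\rho(x)=\inf_{y}\{f(y)+\frac{\rho}{2}\|y-x\|^2\}$; it is continuously differentiable with $\nabla f_\rho(x)=\rho(x-\hat x)$, where $\hat x=\arg\min_y\{f(y)+\frac{\rho}{2}\|y-x\|^2\}$ (unique). *)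

theory Defs
  imports "HOL-Analysis.Analysis"
begin

text \<open>Extended-real valued functions f : R^n -> R \<union> {+inf}; value -inf is excluded by properness.\<close>

definition dom_f :: "('a \<Rightarrow> ereal) \<Rightarrow> 'a set" where
  "dom_f f = {x. f x < \<infinity>}"

definition proper_fun :: "('a \<Rightarrow> ereal) \<Rightarrow> bool" where
  "proper_fun f \<longleftrightarrow> (\<forall>x. f x \<noteq> -\<infinity>) \<and> (\<exists>x. f x < \<infinity>)"

definition closed_fun :: "('a::topological_space \<Rightarrow> ereal) \<Rightarrow> bool" where
  "closed_fun f \<longleftrightarrow> closed {(x, r::real). f x \<le> ereal r}"

definition weakly_convex :: "real \<Rightarrow> ('a::real_normed_vector \<Rightarrow> ereal) \<Rightarrow> bool" where
  "weakly_convex m f \<longleftrightarrow>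
     convex {(x, r::real). f x + ereal (m / 2 * (norm x)\<^sup>2) \<le> ereal r}"

definition inexact_subdiff ::
  "real \<Rightarrow> real \<Rightarrow> ('a::real_inner \<Rightarrow> ereal) \<Rightarrow> 'a \<Rightarrow> 'a set" where
  "inexact_subdiff m \<epsilon> f x =
     {v. \<forall>y. f y \<ge> f x + ereal (inner v (y - x) - m / 2 * (norm (y - x))\<^sup>2 - \<epsilon>)}"

text \<open>dist(0, S) \<le> eta, with the convention dist(0, {}) = +inf.\<close>
definition inexact_stationary ::
  "real \<Rightarrow> real \<Rightarrow> real \<Rightarrow> ('a::real_inner \<Rightarrow> ereal) \<Rightarrow> 'a \<Rightarrow> bool" where
  "inexact_stationary m \<eta> \<epsilon> f x \<longleftrightarrow>
     inexact_subdiff m \<epsilon> f x \<noteq> {} \<and> infdist 0 (inexact_subdiff m \<epsilon> f x) \<le> \<eta>"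

definition moreau_env :: "('a::real_normed_vector \<Rightarrow> ereal) \<Rightarrow> real \<Rightarrow> 'a \<Rightarrow> ereal" where
  "moreau_env f \<rho> x = (INF y. f y + ereal (\<rho> / 2 * (norm (y - x))\<^sup>2))"

end

theory Submission
  imports Defs
begin

text \<open>Put \<open>\<rho> = m + \<lambda>\<close> and let \<open>p\<close> be the proximal point of \<open>x\<close>, the minimiser of
  \<open>f + \<rho>/2 \<parallel>\<cdot> - x\<parallel>\<^sup>2\<close>. Weak convexity makes this objective \<open>(\<rho> - m)\<close>-strongly convex, so proximal
  points exist (the objective is closed and coercive), depend \<open>\<rho>/(\<rho> - m)\<close>-Lipschitz on the base point,
  and the envelope is differentiable with gradient \<open>\<rho> (x - p)\<close>. Comparing the objective at \<open>p\<close>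
  and at \<open>x\<close> with the inexact subgradient inequality at \<open>x\<close> gives
  \<open>\<lambda>/2 d\<^sup>2 \<le> \<parallel>v\<parallel> d + \<epsilon>\<close> for \<open>d = \<parallel>p - x\<parallel>\<close> and every inexact subgradient \<open>v\<close>;
  solving this quadratic inequality bounds \<open>d\<close> by \<open>2\<eta>/\<lambda> + sqrt (2\<epsilon>/\<lambda>)\<close>.\<close>

lemma power2_norm_diff:
  fixes a b :: "'a::real_inner"
  shows "(norm (a - b))\<^sup>2 = (norm a)\<^sup>2 - 2 * inner a b + (norm b)\<^sup>2"
  by (simp add: power2_norm_eq_inner inner_diff_left inner_diff_right inner_commute)

lemma power2_norm_convex_combination:
  fixes a b :: "'a::real_inner"
  shows "(norm (t *\<^sub>R a + (1 - t) *\<^sub>R b))\<^sup>2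
    = t * (norm a)\<^sup>2 + (1 - t) * (norm b)\<^sup>2 - t * (1 - t) * (norm (a - b))\<^sup>2"
  by (simp add: power2_norm_eq_inner inner_add_left inner_add_right inner_diff_left
      inner_diff_right inner_commute algebra_simps)

lemma ereal_real_of_finite: "x \<noteq> -\<infinity> \<Longrightarrow> x < \<infinity> \<Longrightarrow> ereal (real_of_ereal x) = x"
  by (cases x) auto

lemma weakly_convexD:
  fixes f :: "'a::real_inner \<Rightarrow> ereal"
  assumes wc: "weakly_convex m f" and ninf: "\<And>y. f y \<noteq> -\<infinity>"
    and "f a < \<infinity>" "f b < \<infinity>" "0 \<le> t" "t \<le> 1"
  shows "f (t *\<^sub>R a + (1 - t) *\<^sub>R b)
    \<le> ereal (t * real_of_ereal (f a) + (1 - t) * real_of_ereal (f b) + m / 2 * t * (1 - t) * (norm (a - b))\<^sup>2)"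
proof -
  let ?E = "{(x, r::real). f x + ereal (m / 2 * (norm x)\<^sup>2) \<le> ereal r}"
  let ?w = "t *\<^sub>R a + (1 - t) *\<^sub>R b"
  have epi: "(y, real_of_ereal (f y) + m / 2 * (norm y)\<^sup>2) \<in> ?E" if "f y < \<infinity>" for y
    using ereal_real_of_finite[OF ninf that] by (cases "f y") auto
  have "t *\<^sub>R (a, real_of_ereal (f a) + m / 2 * (norm a)\<^sup>2)
      + (1 - t) *\<^sub>R (b, real_of_ereal (f b) + m / 2 * (norm b)\<^sup>2) \<in> ?E"
    using wc assms(3-) epi unfolding weakly_convex_def by (intro convexD) auto
  then have "f ?w \<le> ereal (t * (real_of_ereal (f a) + m / 2 * (norm a)\<^sup>2)
      + (1 - t) * (real_of_ereal (f b) + m / 2 * (norm b)\<^sup>2) - m / 2 * (norm ?w)\<^sup>2)"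
    by (cases "f ?w") auto
  also have "\<dots> = t * real_of_ereal (f a) + (1 - t) * real_of_ereal (f b) + m / 2 * t * (1 - t) * (norm (a - b))\<^sup>2"
    unfolding power2_norm_convex_combination by (simp add: field_simps)
  finally show ?thesis .
qed

definition prox_point :: "('a::real_normed_vector \<Rightarrow> ereal) \<Rightarrow> real \<Rightarrow> 'a \<Rightarrow> 'a \<Rightarrow> bool" where
  "prox_point f \<rho> z p \<longleftrightarrow> f p < \<infinity> \<and>
     (\<forall>y. f p + ereal (\<rho> / 2 * (norm (p - z))\<^sup>2) \<le> f y + ereal (\<rho> / 2 * (norm (y - z))\<^sup>2))"

lemma prox_point_le:
  assumes "prox_point f \<rho> z p" and ninf: "\<And>y. f y \<noteq> -\<infinity>" and "f y < \<infinity>"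
  shows "real_of_ereal (f p) + \<rho> / 2 * (norm (p - z))\<^sup>2 \<le> real_of_ereal (f y) + \<rho> / 2 * (norm (y - z))\<^sup>2"
proof -
  have "f p < \<infinity>" "f p + ereal (\<rho> / 2 * (norm (p - z))\<^sup>2) \<le> f y + ereal (\<rho> / 2 * (norm (y - z))\<^sup>2)"
    using assms(1) unfolding prox_point_def by auto
  then show ?thesis
    using ereal_real_of_finite[OF ninf \<open>f p < \<infinity>\<close>] ereal_real_of_finite[OF ninf \<open>f y < \<infinity>\<close>]
    by (metis plus_ereal.simps(1) ereal_less_eq(3))
qed

lemma moreau_env_prox_point:
  assumes "prox_point f \<rho> z p"
  shows "moreau_env f \<rho> z = f p + ereal (\<rho> / 2 * (norm (p - z))\<^sup>2)"
  unfolding moreau_env_def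
proof (rule antisym)
  show "(INF y. f y + ereal (\<rho> / 2 * (norm (y - z))\<^sup>2)) \<le> f p + ereal (\<rho> / 2 * (norm (p - z))\<^sup>2)"
    by (rule INF_lower) simp
  show "f p + ereal (\<rho> / 2 * (norm (p - z))\<^sup>2) \<le> (INF y. f y + ereal (\<rho> / 2 * (norm (y - z))\<^sup>2))"
    using assms unfolding prox_point_def by (auto intro: INF_greatest)
qed

lemma real_moreau_env_prox_point:
  assumes "prox_point f \<rho> z p" and "\<And>y. f y \<noteq> -\<infinity>"
  shows "real_of_ereal (moreau_env f \<rho> z) = real_of_ereal (f p) + \<rho> / 2 * (norm (p - z))\<^sup>2"
  using assms ereal_real_of_finite[of "f p"] unfolding moreau_env_prox_point[OF assms(1)] prox_point_def
  by (cases "f p") auto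

lemma quadratic_le_imp_le_max:
  fixes t B C lam :: real
  assumes "lam > 0" "0 \<le> t" "B \<ge> 0" "lam / 2 * t\<^sup>2 \<le> B * t + C"
  shows "t \<le> max 1 (2 * (B + \<bar>C\<bar>) / lam)"
proof (cases "t \<le> 1")
  case False
  then have "\<bar>C\<bar> \<le> \<bar>C\<bar> * t"
    by (simp add: mult_le_cancel_left1)
  then have "lam / 2 * t * t \<le> (B + \<bar>C\<bar>) * t"
    using assms by (simp add: power2_eq_square distrib_right)
  then have "lam / 2 * t \<le> B + \<bar>C\<bar>"
    using False by simp
  then have "t \<le> 2 * (B + \<bar>C\<bar>) / lam"
    using assms by (simp add: field_simps)
  then show ?thesis
    by simp
qed simp

lemma quadratic_minorant_sublevel_bounded:
  fixes v a z :: "'a::real_inner"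
  assumes "m < \<rho>"
  obtains R where "\<And>y. c + inner v (y - a) - m / 2 * (norm (y - a))\<^sup>2 + \<rho> / 2 * (norm (y - z))\<^sup>2 \<le> M
    \<Longrightarrow> norm (y - a) \<le> R"
proof
  define B where "B = norm (v - \<rho> *\<^sub>R (z - a))"
  define C where "C = M - c - \<rho> / 2 * (norm (z - a))\<^sup>2"
  fix y
  assume sub: "c + inner v (y - a) - m / 2 * (norm (y - a))\<^sup>2 + \<rho> / 2 * (norm (y - z))\<^sup>2 \<le> M"
  have "y - z = (y - a) - (z - a)"
    by simp
  then have "\<rho> / 2 * (norm (y - z))\<^sup>2
      = \<rho> / 2 * (norm (y - a))\<^sup>2 - \<rho> * inner (z - a) (y - a) + \<rho> / 2 * (norm (z - a))\<^sup>2"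
    by (simp only: power2_norm_diff inner_commute[of "y - a"] right_diff_distrib distrib_left)
  moreover have "inner (v - \<rho> *\<^sub>R (z - a)) (y - a) = inner v (y - a) - \<rho> * inner (z - a) (y - a)"
    by (simp only: inner_diff_left inner_scaleR_left)
  moreover have "- (B * norm (y - a)) \<le> inner (v - \<rho> *\<^sub>R (z - a)) (y - a)"
    unfolding B_def using Cauchy_Schwarz_ineq2[of "v - \<rho> *\<^sub>R (z - a)" "y - a"] by linarith
  moreover have "(\<rho> - m) / 2 * (norm (y - a))\<^sup>2 = \<rho> / 2 * (norm (y - a))\<^sup>2 - m / 2 * (norm (y - a))\<^sup>2"
    by (simp add: diff_divide_distrib left_diff_distrib)
  ultimately have "(\<rho> - m) / 2 * (norm (y - a))\<^sup>2 \<le> B * norm (y - a) + C"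
    using sub unfolding C_def by linarith
  then show "norm (y - a) \<le> max 1 (2 * (B + \<bar>C\<bar>) / (\<rho> - m))"
    using assms unfolding B_def by (intro quadratic_le_imp_le_max) auto
qed

lemma prox_sublevel_bounded:
  fixes f :: "'a::real_inner \<Rightarrow> ereal"
  assumes lb: "\<And>y. ereal (c + inner v (y - a) - m / 2 * (norm (y - a))\<^sup>2) \<le> f y"
    and "0 \<le> m" "m < \<rho>"
  shows "bounded {(y, r). f y \<le> ereal r \<and> r + \<rho> / 2 * (norm (y - z))\<^sup>2 \<le> M}"
proof -
  obtain R where R: "\<And>y. c + inner v (y - a) - m / 2 * (norm (y - a))\<^sup>2 + \<rho> / 2 * (norm (y - z))\<^sup>2 \<le> M
    \<Longrightarrow> norm (y - a) \<le> R"
    using quadratic_minorant_sublevel_bounded[OF \<open>m < \<rho>\<close>] by blast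
  have "(y, r) \<in> cball a R \<times> {c - norm v * R - m / 2 * R\<^sup>2 .. M}"
    if "f y \<le> ereal r" "r + \<rho> / 2 * (norm (y - z))\<^sup>2 \<le> M" for y r
  proof -
    have lr: "c + inner v (y - a) - m / 2 * (norm (y - a))\<^sup>2 \<le> r"
      using lb[of y] that(1) by (metis ereal_less_eq(3) order.trans)
    then have yR: "norm (y - a) \<le> R"
      using that(2) by (intro R) linarith
    have "- (norm v * R) \<le> inner v (y - a)"
      using Cauchy_Schwarz_ineq2[of v "y - a"] mult_left_mono[OF yR norm_ge_zero[of v]] by linarith
    moreover have "m / 2 * (norm (y - a))\<^sup>2 \<le> m / 2 * R\<^sup>2"
      using yR \<open>0 \<le> m\<close> by (intro mult_left_mono power_mono) auto
    moreover have "0 \<le> \<rho> / 2 * (norm (y - z))\<^sup>2"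
      using \<open>0 \<le> m\<close> \<open>m < \<rho>\<close> by simp
    ultimately show ?thesis
      using lr yR that(2) by (simp add: dist_norm norm_minus_commute)
  qed
  then have "{(y, r). f y \<le> ereal r \<and> r + \<rho> / 2 * (norm (y - z))\<^sup>2 \<le> M}
    \<subseteq> cball a R \<times> {c - norm v * R - m / 2 * R\<^sup>2 .. M}"
    by blast
  then show ?thesis
    by (rule bounded_subset[OF bounded_Times[OF bounded_cball bounded_closed_interval]])
qed

lemma prox_point_exists:
  fixes f :: "'a::euclidean_space \<Rightarrow> ereal"
  assumes "closed_fun f" and ninf: "\<And>y. f y \<noteq> -\<infinity>" and "f a < \<infinity>"
    and lb: "\<And>y. ereal (c + inner v (y - a) - m / 2 * (norm (y - a))\<^sup>2) \<le> f y"
    and "0 \<le> m" "m < \<rho>"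
  obtains p where "prox_point f \<rho> z p"
proof -
  text \<open>Minimise \<open>r + \<rho>/2 \<parallel>y - z\<parallel>\<^sup>2\<close> over a slice of the epigraph, which is compact by
    closedness of \<open>f\<close> and the quadratic minorant.\<close>
  define h where "h = (\<lambda>q::'a \<times> real. snd q + \<rho> / 2 * (norm (fst q - z))\<^sup>2)"
  define M where "M = real_of_ereal (f a) + \<rho> / 2 * (norm (a - z))\<^sup>2"
  define K where "K = {(y, r). f y \<le> ereal r} \<inter> {q. h q \<le> M}"
  have cont: "continuous_on UNIV h"
    unfolding h_def by (intro continuous_intros)
  have "closed K"
    using \<open>closed_fun f\<close> unfolding K_def closed_fun_def
    by (intro closed_Int closed_Collect_le cont continuous_on_const)
  moreover have "bounded K"
    using prox_sublevel_bounded[OF lb \<open>0 \<le> m\<close> \<open>m < \<rho>\<close>, of z M]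
    unfolding K_def h_def by (rule bounded_subset) auto
  ultimately have "compact K"
    by (simp add: compact_eq_bounded_closed)
  have "(a, real_of_ereal (f a)) \<in> K"
    using ereal_real_of_finite[OF ninf \<open>f a < \<infinity>\<close>] unfolding K_def h_def M_def by auto
  then obtain p r0 where "(p, r0) \<in> K" and hmin: "\<And>q. q \<in> K \<Longrightarrow> h (p, r0) \<le> h q"
    using continuous_attains_inf[OF \<open>compact K\<close> _ continuous_on_subset[OF cont]] by fastforce
  then have "f p \<le> ereal r0" "h (p, r0) \<le> M"
    unfolding K_def by auto
  have "ereal (h (p, r0)) \<le> f y + ereal (\<rho> / 2 * (norm (y - z))\<^sup>2)" for y
  proof (cases "f y = \<infinity>")
    case False
    then have fy: "f y = ereal (real_of_ereal (f y))"
      using ereal_real_of_finite[OF ninf] by auto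
    have "h (p, r0) \<le> h (y, real_of_ereal (f y))"
    proof (cases "(y, real_of_ereal (f y)) \<in> K")
      case False
      then show ?thesis
        using fy \<open>h (p, r0) \<le> M\<close> unfolding K_def by auto
    qed (rule hmin)
    then show ?thesis
      by (subst fy) (simp add: h_def)
  qed simp
  moreover have "f p + ereal (\<rho> / 2 * (norm (p - z))\<^sup>2) \<le> ereal (h (p, r0))"
    using add_right_mono[OF \<open>f p \<le> ereal r0\<close>, of "ereal (\<rho> / 2 * (norm (p - z))\<^sup>2)"] by (simp add: h_def)
  ultimately have "prox_point f \<rho> z p"
    using \<open>f p \<le> ereal r0\<close> unfolding prox_point_def by (auto intro: order_trans le_less_trans)
  then show ?thesis ..
qed

lemma prox_point_quadratic_growth:
  fixes f :: "'a::real_inner \<Rightarrow> ereal"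
  assumes wc: "weakly_convex m f" and ninf: "\<And>y. f y \<noteq> -\<infinity>"
    and prox: "prox_point f \<rho> z p" and "f y < \<infinity>"
  shows "real_of_ereal (f p) + \<rho> / 2 * (norm (p - z))\<^sup>2 + (\<rho> - m) / 2 * (norm (y - p))\<^sup>2
    \<le> real_of_ereal (f y) + \<rho> / 2 * (norm (y - z))\<^sup>2"
proof -
  define F where "F = (\<lambda>y. real_of_ereal (f y))"
  define D where "D = (norm (y - p))\<^sup>2"
  define Pp where "Pp = F p + \<rho> / 2 * (norm (p - z))\<^sup>2"
  define Py where "Py = F y + \<rho> / 2 * (norm (y - z))\<^sup>2"
  define K where "K = (\<rho> - m) / 2 * D"
  have "f p < \<infinity>"
    using prox unfolding prox_point_def by simp
  text \<open>Test the minimality of \<open>p\<close> against points \<open>w\<close> of the segment from \<open>p\<close> to \<open>y\<close>;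
    the resulting bound \<open>u K \<le> Py - Pp\<close> improves to \<open>K \<le> Py - Pp\<close> as \<open>w\<close> approaches \<open>p\<close>.\<close>
  have "u * K \<le> Py - Pp" if "0 < u" "u < 1" for u
  proof -
    define s where "s = 1 - u"
    have s: "0 < s" "s < 1" "1 - s = u"
      using that unfolding s_def by auto
    define w where "w = s *\<^sub>R y + (1 - s) *\<^sub>R p"
    have fw: "f w \<le> ereal (s * F y + (1 - s) * F p + m / 2 * s * (1 - s) * D)"
      unfolding w_def F_def D_def using s by (intro weakly_convexD[OF wc ninf \<open>f y < \<infinity>\<close> \<open>f p < \<infinity>\<close>]) auto
    then have "f w < \<infinity>"
      by (cases "f w") auto
    have "w - z = s *\<^sub>R (y - z) + (1 - s) *\<^sub>R (p - z)"
      unfolding w_def by (simp add: algebra_simps)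
    then have nw: "(norm (w - z))\<^sup>2 = s * (norm (y - z))\<^sup>2 + (1 - s) * (norm (p - z))\<^sup>2 - s * (1 - s) * D"
      by (simp add: power2_norm_convex_combination D_def)
    have "F w \<le> s * F y + (1 - s) * F p + m / 2 * s * (1 - s) * D"
      using fw ereal_real_of_finite[OF ninf \<open>f w < \<infinity>\<close>] unfolding F_def by (metis ereal_less_eq(3))
    moreover have "Pp \<le> F w + \<rho> / 2 * (norm (w - z))\<^sup>2"
      unfolding Pp_def F_def using prox_point_le[OF prox ninf \<open>f w < \<infinity>\<close>] .
    moreover have "s * F y + (1 - s) * F p + m / 2 * s * (1 - s) * D + \<rho> / 2 * (norm (w - z))\<^sup>2
      = s * Py + (1 - s) * Pp - s * (u * K)"
      unfolding nw Py_def Pp_def K_def s(3)[symmetric] by (simp add: algebra_simps diff_divide_distrib)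
    ultimately have "Pp \<le> s * Py + (1 - s) * Pp - s * (u * K)"
      by linarith
    then have "s * (u * K) \<le> s * (Py - Pp)"
      using left_diff_distrib[of 1 s Pp] right_diff_distrib[of s Py Pp] by linarith
    then show ?thesis
      using s by simp
  qed
  then have "K \<le> Py - Pp"
    by (rule field_le_mult_one_interval)
  then show ?thesis
    unfolding Py_def Pp_def K_def F_def D_def by simp
qed

lemma prox_point_lipschitz:
  fixes f :: "'a::real_inner \<Rightarrow> ereal"
  assumes wc: "weakly_convex m f" and ninf: "\<And>y. f y \<noteq> -\<infinity>" and "0 \<le> \<rho>"
    and px: "prox_point f \<rho> x p" and qz: "prox_point f \<rho> z q"
  shows "(\<rho> - m) * norm (q - p) \<le> \<rho> * norm (z - x)"
proof -
  have "f p < \<infinity>" "f q < \<infinity>"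
    using px qz unfolding prox_point_def by auto
  have "(\<rho> - m) * (norm (q - p))\<^sup>2
      \<le> \<rho> / 2 * ((norm (q - x))\<^sup>2 - (norm (p - x))\<^sup>2 + (norm (p - z))\<^sup>2 - (norm (q - z))\<^sup>2)"
    using prox_point_quadratic_growth[OF wc ninf px \<open>f q < \<infinity>\<close>]
      prox_point_quadratic_growth[OF wc ninf qz \<open>f p < \<infinity>\<close>]
      field_sum_of_halves[of "(\<rho> - m) * (norm (q - p))\<^sup>2"]
    unfolding norm_minus_commute[of p q] right_diff_distrib distrib_left times_divide_eq_left by linarith
  also have "\<dots> = \<rho> * inner (q - p) (z - x)"
    by (simp add: power2_norm_eq_inner inner_diff_left inner_diff_right inner_commute algebra_simps)
  also have "\<dots> \<le> \<rho> * (norm (q - p) * norm (z - x))"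
    using \<open>0 \<le> \<rho>\<close> Cauchy_Schwarz_ineq2[of "q - p" "z - x"] by (intro mult_left_mono) auto
  finally have "norm (q - p) * ((\<rho> - m) * norm (q - p)) \<le> norm (q - p) * (\<rho> * norm (z - x))"
    by (simp add: power2_eq_square algebra_simps)
  then show ?thesis
    using \<open>0 \<le> \<rho>\<close> by (cases "norm (q - p) = 0") auto
qed

lemma has_derivative_quadratic_remainder:
  fixes g :: "'a::real_normed_vector \<Rightarrow> 'b::real_normed_vector"
  assumes "bounded_linear L" and rem: "\<And>z. norm (g z - g x - L (z - x)) \<le> C * (norm (z - x))\<^sup>2"
  shows "(g has_derivative L) (at x)"
proof -
  have "((\<lambda>z. C * norm (z - x)) \<longlongrightarrow> C * norm (x - x)) (at x)"
    by (intro tendsto_intros)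
  then have lim: "((\<lambda>z. C * norm (z - x)) \<longlongrightarrow> 0) (at x)"
    by simp
  have "norm (norm (g z - g x - L (z - x)) / norm (z - x)) \<le> C * norm (z - x)" for z
  proof (cases "z = x")
    case False
    then have "norm (z - x) > 0"
      by simp
    then show ?thesis
      using rem[of z] by (simp add: divide_le_eq power2_eq_square mult.assoc)
  qed simp
  then have "((\<lambda>z. norm (g z - g x - L (z - x)) / norm (z - x)) \<longlongrightarrow> 0) (at x)"
    by (intro Lim_null_comparison[OF always_eventually lim]) blast
  with \<open>bounded_linear L\<close> show ?thesis
    unfolding has_derivative_iff_norm by blast
qed

lemma moreau_env_increment_bounds:
  fixes f :: "'a::real_inner \<Rightarrow> ereal"
  assumes ninf: "\<And>y. f y \<noteq> -\<infinity>" and px: "prox_point f \<rho> x p" and qz: "prox_point f \<rho> z q"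
  defines "E \<equiv> \<lambda>y. real_of_ereal (moreau_env f \<rho> y)"
  shows "E z - E x - inner (\<rho> *\<^sub>R (x - p)) (z - x) \<le> \<rho> / 2 * (norm (z - x))\<^sup>2"
    and "\<rho> * inner (p - q) (z - x) + \<rho> / 2 * (norm (z - x))\<^sup>2 \<le> E z - E x - inner (\<rho> *\<^sub>R (x - p)) (z - x)"
proof -
  define F where "F = (\<lambda>y. real_of_ereal (f y))"
  define h where "h = z - x"
  have "f p < \<infinity>" "f q < \<infinity>"
    using px qz unfolding prox_point_def by auto
  have Ex: "E x = F p + \<rho> / 2 * (norm (p - x))\<^sup>2" and Ez: "E z = F q + \<rho> / 2 * (norm (q - z))\<^sup>2"
    unfolding E_def F_def using real_moreau_env_prox_point[OF px ninf] real_moreau_env_prox_point[OF qz ninf] .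
  have up: "E z \<le> F p + \<rho> / 2 * (norm (p - z))\<^sup>2" and lo: "E x \<le> F q + \<rho> / 2 * (norm (q - x))\<^sup>2"
    unfolding Ex Ez F_def using prox_point_le[OF qz ninf \<open>f p < \<infinity>\<close>] prox_point_le[OF px ninf \<open>f q < \<infinity>\<close>] by auto
  have sq: "\<rho> / 2 * (norm (a - b))\<^sup>2 = \<rho> / 2 * (norm a)\<^sup>2 - \<rho> * inner a b + \<rho> / 2 * (norm b)\<^sup>2" for a b :: 'a
    by (simp add: power2_norm_diff algebra_simps)
  have "p - x - h = p - z" "q - x - h = q - z"
    unfolding h_def by simp_all
  note ep = sq[of "p - x" h, unfolded this(1)] and eq = sq[of "q - x" h, unfolded this(2)]
  have "inner (\<rho> *\<^sub>R (x - p)) h = - (\<rho> * inner (p - x) h)"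
    by (simp add: inner_diff_left algebra_simps)
  moreover have "\<rho> * inner (p - q) h = \<rho> * inner (p - x) h - \<rho> * inner (q - x) h"
    by (simp add: algebra_simps)
  ultimately show "E z - E x - inner (\<rho> *\<^sub>R (x - p)) (z - x) \<le> \<rho> / 2 * (norm (z - x))\<^sup>2"
    and "\<rho> * inner (p - q) (z - x) + \<rho> / 2 * (norm (z - x))\<^sup>2 \<le> E z - E x - inner (\<rho> *\<^sub>R (x - p)) (z - x)"
    using up lo Ex Ez ep eq unfolding h_def[symmetric] by linarith+
qed

lemma moreau_env_has_derivative:
  fixes f :: "'a::real_inner \<Rightarrow> ereal"
  assumes wc: "weakly_convex m f" and ninf: "\<And>y. f y \<noteq> -\<infinity>" and "0 \<le> m" "m < \<rho>"
    and prox: "\<And>z. \<exists>q. prox_point f \<rho> z q" and px: "prox_point f \<rho> x p"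
  shows "((\<lambda>y. real_of_ereal (moreau_env f \<rho> y)) has_derivative inner (\<rho> *\<^sub>R (x - p))) (at x)"
proof (rule has_derivative_quadratic_remainder)
  define c where "c = \<rho> / (\<rho> - m)"
  have "c \<ge> 0" "\<rho> \<ge> 0"
    unfolding c_def using \<open>0 \<le> m\<close> \<open>m < \<rho>\<close> by auto
  fix z
  define h where "h = z - x"
  obtain q where qz: "prox_point f \<rho> z q"
    using prox by blast
  have "(\<rho> - m) * norm (q - p) \<le> \<rho> * norm h"
    unfolding h_def using prox_point_lipschitz[OF wc ninf \<open>\<rho> \<ge> 0\<close> px qz] .
  then have "norm (p - q) \<le> c * norm h"
    unfolding c_def using \<open>m < \<rho>\<close> by (simp add: norm_minus_commute field_simps)
  have "\<bar>inner (p - q) h\<bar> \<le> norm (p - q) * norm h"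
    by (rule Cauchy_Schwarz_ineq2)
  also have "\<dots> \<le> c * norm h * norm h"
    using \<open>norm (p - q) \<le> c * norm h\<close> by (rule mult_right_mono) simp
  finally have "- inner (p - q) h \<le> c * (norm h)\<^sup>2"
    by (simp add: power2_eq_square mult.assoc)
  then have "\<rho> * (- inner (p - q) h) \<le> \<rho> * (c * (norm h)\<^sup>2)"
    using \<open>\<rho> \<ge> 0\<close> by (rule mult_left_mono)
  moreover have "0 \<le> \<rho> * (c * (norm h)\<^sup>2)" "0 \<le> \<rho> / 2 * (norm h)\<^sup>2"
    using \<open>c \<ge> 0\<close> \<open>\<rho> \<ge> 0\<close> by simp_all
  ultimately show "norm (real_of_ereal (moreau_env f \<rho> z) - real_of_ereal (moreau_env f \<rho> x)
      - inner (\<rho> *\<^sub>R (x - p)) (z - x)) \<le> (\<rho> / 2 + \<rho> * c) * (norm (z - x))\<^sup>2"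
    using moreau_env_increment_bounds[OF ninf px qz]
    unfolding h_def[symmetric] real_norm_def distrib_right mult.assoc by linarith
qed (rule bounded_linear_inner_right)

lemma inexact_subdiff_minorant:
  assumes "v \<in> inexact_subdiff m \<epsilon> f x" and "f x \<noteq> -\<infinity>" "f x < \<infinity>"
  shows "ereal (real_of_ereal (f x) - \<epsilon> + inner v (y - x) - m / 2 * (norm (y - x))\<^sup>2) \<le> f y"
proof -
  have "f x + ereal (inner v (y - x) - m / 2 * (norm (y - x))\<^sup>2 - \<epsilon>) \<le> f y"
    using assms(1) unfolding inexact_subdiff_def by blast
  then show ?thesis
    using ereal_real_of_finite[OF assms(2,3)] by (metis plus_ereal.simps(1) add.assoc add_diff_eq diff_add_eq)
qed

lemma quadratic_le_imp_le_root:
  fixes lam d \<eta> \<epsilon> :: real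
  assumes "lam > 0" "d \<ge> 0" "\<eta> \<ge> 0" "\<epsilon> \<ge> 0" "lam / 2 * d\<^sup>2 \<le> \<eta> * d + \<epsilon>"
  shows "d \<le> 2 / lam * \<eta> + sqrt (2 / lam * \<epsilon>)"
proof -
  define a where "a = 2 / lam * \<eta>"
  define b where "b = 2 / lam * \<epsilon>"
  have "a \<ge> 0" "b \<ge> 0"
    using assms unfolding a_def b_def by auto
  have "d\<^sup>2 \<le> a * d + b"
    using assms unfolding a_def b_def by (simp add: field_simps)
  show "d \<le> a + sqrt b"
  proof (rule ccontr)
    assume "\<not> d \<le> a + sqrt b"
    then have gt: "d > a + sqrt b"
      by simp
    have "sqrt b \<ge> 0"
      using \<open>b \<ge> 0\<close> by simp
    then have "d > 0" "d \<ge> sqrt b"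
      using gt \<open>a \<ge> 0\<close> by linarith+
    then have "d * d > d * (a + sqrt b)" "d * sqrt b \<ge> sqrt b * sqrt b"
      using gt \<open>sqrt b \<ge> 0\<close> by (simp, intro mult_right_mono)
    moreover have "sqrt b * sqrt b = b"
      using \<open>b \<ge> 0\<close> by simp
    ultimately have "d\<^sup>2 > a * d + b"
      by (simp add: power2_eq_square algebra_simps)
    with \<open>d\<^sup>2 \<le> a * d + b\<close> show False by simp
  qed
qed

lemma prox_point_dist_le_inexact_stationary:
  fixes f :: "'a::real_inner \<Rightarrow> ereal"
  assumes ninf: "\<And>y. f y \<noteq> -\<infinity>" and "f x < \<infinity>" and stat: "inexact_stationary m \<eta> \<epsilon> f x"
    and px: "prox_point f (m + lam) x p"
  shows "lam / 2 * (norm (p - x))\<^sup>2 \<le> \<eta> * norm (p - x) + \<epsilon>"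
proof -
  define S where "S = inexact_subdiff m \<epsilon> f x"
  define d where "d = norm (p - x)"
  have "S \<noteq> {}" "infdist 0 S \<le> \<eta>"
    using stat unfolding inexact_stationary_def S_def by auto
  have "f p < \<infinity>"
    using px unfolding prox_point_def by simp
  have key: "lam / 2 * d\<^sup>2 \<le> norm v * d + \<epsilon>" if "v \<in> S" for v
  proof -
    have "ereal (real_of_ereal (f x) - \<epsilon> + inner v (p - x) - m / 2 * d\<^sup>2) \<le> f p"
      using inexact_subdiff_minorant[OF that[unfolded S_def] ninf \<open>f x < \<infinity>\<close>] unfolding d_def .
    then have "real_of_ereal (f x) - \<epsilon> + inner v (p - x) - m / 2 * d\<^sup>2 \<le> real_of_ereal (f p)"
      using ereal_real_of_finite[OF ninf \<open>f p < \<infinity>\<close>] by (metis ereal_less_eq(3))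
    moreover have "real_of_ereal (f p) + (m + lam) / 2 * d\<^sup>2 \<le> real_of_ereal (f x)"
      using prox_point_le[OF px ninf \<open>f x < \<infinity>\<close>] unfolding d_def by simp
    moreover have "- inner v (p - x) \<le> norm v * d"
      unfolding d_def using Cauchy_Schwarz_ineq2[of v "p - x"] by linarith
    moreover have "(m + lam) / 2 * d\<^sup>2 = m / 2 * d\<^sup>2 + lam / 2 * d\<^sup>2"
      by (simp add: add_divide_distrib distrib_right)
    ultimately show ?thesis
      by linarith
  qed
  show ?thesis
  proof (cases "d = 0")
    case True
    then show ?thesis
      using key \<open>S \<noteq> {}\<close> unfolding d_def by auto
  next
    case False
    then have "d > 0"
      unfolding d_def by simp
    have "(lam / 2 * d\<^sup>2 - \<epsilon>) / d \<le> infdist 0 S"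
      unfolding infdist_notempty[OF \<open>S \<noteq> {}\<close>]
    proof (rule cINF_greatest[OF \<open>S \<noteq> {}\<close>])
      show "(lam / 2 * d\<^sup>2 - \<epsilon>) / d \<le> dist 0 v" if "v \<in> S" for v
        using key[OF that] \<open>d > 0\<close> by (simp add: pos_divide_le_eq)
    qed
    then have "lam / 2 * d\<^sup>2 - \<epsilon> \<le> infdist 0 S * d"
      using \<open>d > 0\<close> by (simp add: pos_divide_le_eq)
    also have "\<dots> \<le> \<eta> * d"
      using \<open>infdist 0 S \<le> \<eta>\<close> \<open>d > 0\<close> by (simp add: mult_right_mono)
    finally show ?thesis
      unfolding d_def by simp
  qed
qed

lemma moreau_env_gradient_bound:
  fixes f :: "'a::euclidean_space \<Rightarrow> ereal"
  assumes "0 \<le> m" and "closed_fun f" and "proper_fun f" and wc: "weakly_convex m f"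
    and "0 \<le> \<eta>" "0 \<le> \<epsilon>" and "x \<in> dom_f f" and stat: "inexact_stationary m \<eta> \<epsilon> f x" and "0 < lam"
  shows "\<exists>g. ((\<lambda>y. real_of_ereal (moreau_env f (m + lam) y)) has_derivative inner g) (at x)
    \<and> norm g \<le> (m + lam) * (2 / lam * \<eta> + sqrt (2 / lam * \<epsilon>))"
proof -
  have ninf: "\<And>y. f y \<noteq> -\<infinity>" and "f x < \<infinity>"
    using \<open>proper_fun f\<close> \<open>x \<in> dom_f f\<close> unfolding proper_fun_def dom_f_def by auto
  obtain v where "v \<in> inexact_subdiff m \<epsilon> f x"
    using stat unfolding inexact_stationary_def by blast
  note lb = inexact_subdiff_minorant[OF this ninf \<open>f x < \<infinity>\<close>]
  have "m < m + lam"
    using \<open>0 < lam\<close> by simp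
  have prox: "\<exists>q. prox_point f (m + lam) z q" for z
    using prox_point_exists[OF \<open>closed_fun f\<close> ninf \<open>f x < \<infinity>\<close> lb \<open>0 \<le> m\<close> \<open>m < m + lam\<close>] by blast
  then obtain p where px: "prox_point f (m + lam) x p"
    by blast
  have "norm (p - x) \<le> 2 / lam * \<eta> + sqrt (2 / lam * \<epsilon>)"
    using prox_point_dist_le_inexact_stationary[OF ninf \<open>f x < \<infinity>\<close> stat px]
    by (intro quadratic_le_imp_le_root) (use \<open>0 < lam\<close> \<open>0 \<le> \<eta>\<close> \<open>0 \<le> \<epsilon>\<close> in auto)
  then have "norm ((m + lam) *\<^sub>R (x - p)) \<le> (m + lam) * (2 / lam * \<eta> + sqrt (2 / lam * \<epsilon>))"
    using \<open>m < m + lam\<close> \<open>0 \<le> m\<close> by (simp add: norm_minus_commute mult_left_mono)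
  with moreau_env_has_derivative[OF wc ninf \<open>0 \<le> m\<close> \<open>m < m + lam\<close> prox px] show ?thesis
    by blast
qed

lemma gradient_bound_double_modulus:
  fixes m \<eta> \<epsilon> :: real
  assumes "0 < m"
  shows "(m + m) * (2 / m * \<eta> + sqrt (2 / m * \<epsilon>)) = 4 * \<eta> + 2 * sqrt (2 * m * \<epsilon>)"
proof -
  have "m * sqrt (2 / m * \<epsilon>) = sqrt (m\<^sup>2) * sqrt (2 / m * \<epsilon>)"
    using assms by simp
  also have "\<dots> = sqrt (m\<^sup>2 * (2 / m * \<epsilon>))"
    by (rule real_sqrt_mult[symmetric])
  also have "m\<^sup>2 * (2 / m * \<epsilon>) = 2 * m * \<epsilon>"
    using assms by (simp add: power2_eq_square)
  finally show ?thesis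
    using assms by (simp add: algebra_simps)
qed

theorem mainTheorem1:
  fixes f :: "real ^ 'n \<Rightarrow> ereal" and m \<eta> \<epsilon> :: real and x :: "real ^ 'n"
  assumes "m \<ge> 0"
    and "closed_fun f" and "proper_fun f" and "weakly_convex m f"
    and "\<eta> \<ge> 0" and "\<epsilon> \<ge> 0"
    and "x \<in> dom_f f"
    and "inexact_stationary m \<eta> \<epsilon> f x"
  shows "(\<forall>lam>0. \<exists>g. ((\<lambda>y. real_of_ereal (moreau_env f (m + lam) y)) has_derivative (\<lambda>h. inner g h)) (at x)
            \<and> norm g \<le> (m + lam) * (2 / lam * \<eta> + sqrt (2 / lam * \<epsilon>)))
       \<and> (m > 0 \<longrightarrow> (\<exists>g. ((\<lambda>y. real_of_ereal (moreau_env f (2 * m) y)) has_derivative (\<lambda>h. inner g h)) (at x)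
            \<and> norm g \<le> 4 * \<eta> + 2 * sqrt (2 * m * \<epsilon>)))"
proof (intro conjI allI impI)
  fix lam :: real
  assume "lam > 0"
  show "\<exists>g. ((\<lambda>y. real_of_ereal (moreau_env f (m + lam) y)) has_derivative inner g) (at x)
      \<and> norm g \<le> (m + lam) * (2 / lam * \<eta> + sqrt (2 / lam * \<epsilon>))"
    by (rule moreau_env_gradient_bound[OF assms \<open>lam > 0\<close>])
next
  assume "m > 0"
  from moreau_env_gradient_bound[OF assms this]
  show "\<exists>g. ((\<lambda>y. real_of_ereal (moreau_env f (2 * m) y)) has_derivative inner g) (at x)
      \<and> norm g \<le> 4 * \<eta> + 2 * sqrt (2 * m * \<epsilon>)"
    unfolding gradient_bound_double_modulus[OF \<open>m > 0\<close>] by (simp only: mult_2)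
qed

end
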